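(* Let $X_1,\dots,X_n,T$ be independent random variables with common finite support $(l,r)$, where $X_1,\dots,X_n$ are i.i.d. with common CDF $F$ (distributed as $X$), and $T$ is uniformly distributed over $(l,r)$. Then $$R_{k,n}=\frac{1}{r-l}\sum_{j=k}^n\binom{n}{j}G_X(n-j,j),\qquad 0\le k\le n.$$
   Context: The reliability of the multi-component stress-strength system with strengths $X_1,\dots,X_n$ and stress $T$ (with CDF $F_T$), i.e. the probability that at least $k$ of the $X_i$ exceed $T$, is $R_{k,n}=\sum_{j=k}^n\binom{n}{j}\int_{-\infty}^{+\infty}[1-F(t)]^j[F(t)]^{n-j}\,dF_T(t)$, with $R_{0,n}=1$. The CIGF of $X$ is $G_X(\alpha,\beta)=\int_l^r [F(x)]^\alpha[1-F(x)]^\beta\,dx$ where $l=\inf\{x:F(x)>0\}$, $r=\sup\{x:F(x)<1\}$. *)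

theory Defs
  imports "HOL-Probability.Probability"
begin

definition supp_l :: "(real \<Rightarrow> real) \<Rightarrow> real" where
  "supp_l F = Inf {x. F x > 0}"

definition supp_r :: "(real \<Rightarrow> real) \<Rightarrow> real" where
  "supp_r F = Sup {x. F x < 1}"

definition CIGF :: "(real \<Rightarrow> real) \<Rightarrow> real \<Rightarrow> real \<Rightarrow> real" where
  "CIGF F \<alpha> \<beta> = (LBINT x:{supp_l F<..<supp_r F}. (F x) powr \<alpha> * (1 - F x) powr \<beta>)"

text \<open>Reliability of the k-out-of-n stress-strength system: strengths have CDF F,
  stress has distribution MT (so dF_T is integration against MT).\<close>
definition rel_kn :: "nat \<Rightarrow> nat \<Rightarrow> (real \<Rightarrow> real) \<Rightarrow> real measure \<Rightarrow> real" where
  "rel_kn k n F MT = (if k = 0 then 1 else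
     (\<Sum>j=k..n. real (n choose j) * (\<integral>t. (1 - F t) ^ j * (F t) ^ (n - j) \<partial>MT)))"

end

theory Submission
  imports Defs
begin

text \<open>Integrating against the uniform distribution on \<open>(l, r)\<close> is Lebesgue integration over
  \<open>(l, r)\<close> divided by \<open>r - l\<close>, and on \<open>(l, r)\<close> the CDF lies strictly between 0 and 1, so
  the real powers in \<open>G\<^sub>X(n - j, j)\<close> are ordinary powers. Hence each summand of \<open>R\<^sub>k\<^sub>,\<^sub>n\<close>
  is \<open>(n choose j) G\<^sub>X(n - j, j) / (r - l)\<close>. For \<open>k = 0\<close> the convention \<open>R\<^sub>0\<^sub>,\<^sub>n = 1\<close>
  agrees with the sum by the binomial theorem.\<close>

lemma integral_uniform_measure:
  fixes f :: "'a \<Rightarrow> real"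
  assumes A[measurable]: "A \<in> sets M" and "emeasure M A \<noteq> 0" "emeasure M A \<noteq> \<infinity>"
    and f[measurable]: "f \<in> borel_measurable M"
  shows "integral\<^sup>L (uniform_measure M A) f = (LINT x:A|M. f x) / measure M A"
proof -
  have "0 < measure M A"
    using assms by (simp add: emeasure_eq_ennreal_measure measure_nonneg order_less_le)
  then have "1 / ennreal (measure M A) = ennreal (1 / measure M A)"
    by (metis divide_ennreal ennreal_1 zero_le_one)
  then have "uniform_measure M A = density M (\<lambda>x. ennreal (indicator A x / measure M A))"
    unfolding uniform_measure_def using assms(3)
    by (intro density_cong) (auto simp: emeasure_eq_ennreal_measure indicator_def)
  then show ?thesis
    by (simp add: integral_density set_lebesgue_integral_def)
qed

lemma supp_l_less_imp_pos:
  assumes "mono F" and "{x. 0 < F x} \<noteq> {}" and "supp_l F < x"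
  shows "0 < F x"
proof -
  obtain y where "0 < F y" "y < x"
    using cInf_lessD[OF assms(2)] assms(3) by (auto simp: supp_l_def)
  then show ?thesis
    using monoD[OF assms(1), of y x] by simp
qed

lemma less_supp_r_imp_less_1:
  assumes "mono F" and "{x. F x < 1} \<noteq> {}" and "x < supp_r F"
  shows "F x < 1"
proof -
  obtain y where "F y < 1" "x < y"
    using less_cSupD[OF assms(2)] assms(3) by (auto simp: supp_r_def)
  then show ?thesis
    using monoD[OF assms(1), of x y] by simp
qed

lemma (in real_distribution) cdf_strictly_between_0_1:
  assumes "supp_l (cdf M) < x" and "x < supp_r (cdf M)"
  shows "0 < cdf M x" and "cdf M x < 1"
proof -
  have mono: "mono (cdf M)"
    by (auto intro: monoI cdf_nondecreasing)
  have "\<forall>\<^sub>F y in at_top. 0 < cdf M y"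
    using cdf_lim_at_top_prob by (rule order_tendstoD) simp
  then have "{y. 0 < cdf M y} \<noteq> {}"
    using eventually_happens by fastforce
  then show "0 < cdf M x"
    by (rule supp_l_less_imp_pos[OF mono _ assms(1)])
  have "\<forall>\<^sub>F y in at_bot. cdf M y < 1"
    using cdf_lim_at_bot by (rule order_tendstoD) simp
  then have "{y. cdf M y < 1} \<noteq> {}"
    using eventually_happens by fastforce
  then show "cdf M x < 1"
    by (rule less_supp_r_imp_less_1[OF mono _ assms(2)])
qed

text \<open>The hypothesis is needed because \<open>0 powr 0 = 0\<close> in Isabelle.\<close>

lemma CIGF_of_nat:
  assumes "\<And>x. supp_l F < x \<Longrightarrow> x < supp_r F \<Longrightarrow> 0 < F x \<and> F x < 1"
  shows "CIGF F (real a) (real b) = (LBINT x:{supp_l F<..<supp_r F}. F x ^ a * (1 - F x) ^ b)"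
  unfolding CIGF_def
  by (rule set_lebesgue_integral_cong) (auto simp: assms powr_realpow)

lemma rel_kn_eq_sum:
  assumes "prob_space MT" and [measurable]: "F \<in> borel_measurable MT"
    and F_0_1: "\<And>t. 0 \<le> F t \<and> F t \<le> 1"
  shows "rel_kn k n F MT = (\<Sum>j=k..n. real (n choose j) * (\<integral>t. (1 - F t) ^ j * F t ^ (n - j) \<partial>MT))"
proof (cases "k = 0")
  case True
  interpret prob_space MT by fact
  have "integrable MT (\<lambda>t. (1 - F t) ^ j * F t ^ (n - j))" for j
  proof (rule integrable_const_bound[where B = 1])
    show "AE t in MT. norm ((1 - F t) ^ j * F t ^ (n - j)) \<le> 1"
      using F_0_1 by (auto simp: abs_mult intro!: mult_le_one power_le_one)
  qed simp
  then have "(\<Sum>j=0..n. real (n choose j) * (\<integral>t. (1 - F t) ^ j * F t ^ (n - j) \<partial>MT))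
      = (\<integral>t. (\<Sum>j=0..n. real (n choose j) * ((1 - F t) ^ j * F t ^ (n - j))) \<partial>MT)"
    by simp
  also have "\<dots> = (\<integral>t. ((1 - F t) + F t) ^ n \<partial>MT)"
    by (simp only: binomial_ring atLeast0AtMost mult.assoc)
  also have "\<dots> = 1"
    by (simp add: prob_space)
  finally show ?thesis
    using True by (simp add: rel_kn_def)
qed (simp add: rel_kn_def)

theorem proposition11:
  fixes M :: "real measure" and F :: "real \<Rightarrow> real" and l r :: real and k n :: nat
  assumes "real_distribution M"
    and "F = cdf M"
    and "bdd_below {x. F x > 0}" and "bdd_above {x. F x < 1}"
    and "l = supp_l F" and "r = supp_r F" and "l < r"
    and "k \<le> n"
  shows "rel_kn k n F (uniform_measure lborel {l<..<r})
         = 1 / (r - l) * (\<Sum>j=k..n. real (n choose j) * CIGF F (real (n - j)) (real j))"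
proof -
  interpret real_distribution M by fact
  have F_measurable [measurable]: "F \<in> borel_measurable borel"
    using assms(2) by (auto intro: borel_measurable_mono monoI cdf_nondecreasing)
  have CIGF_F: "CIGF F (real (n - j)) (real j) = (LBINT t:{l<..<r}. (1 - F t) ^ j * F t ^ (n - j))" for j
    using cdf_strictly_between_0_1 assms(2,5,6) by (simp add: CIGF_of_nat mult.commute)
  have F_bounds: "0 \<le> F t \<and> F t \<le> 1" for t
    using assms(2) cdf_nonneg cdf_bounded_prob by simp
  have "prob_space (uniform_measure lborel {l<..<r})"
    using assms(7) by (intro prob_space_uniform_measure) simp_all
  then have "rel_kn k n F (uniform_measure lborel {l<..<r})
      = (\<Sum>j=k..n. real (n choose j) * (\<integral>t. (1 - F t) ^ j * F t ^ (n - j) \<partial>uniform_measure lborel {l<..<r}))"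
    by (rule rel_kn_eq_sum[OF _ _ F_bounds]) measurable
  also have "\<dots> = (\<Sum>j=k..n. real (n choose j) * (CIGF F (real (n - j)) (real j) / (r - l)))"
    using assms(7) unfolding CIGF_F by (simp add: integral_uniform_measure)
  finally show ?thesis
    by (simp add: sum_distrib_left)
qed

end
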